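(* Let $d\ge2$, $q\ge2$ and $1\le p\le q-1$ with $\gcd(p,q)=1$. For $1\le k\le d-1$, the number $N_k$ of $\sigma_d$-rotational sets $A\subset\mathbb{T}$ that are the union of exactly $k$ distinct $\sigma_d$-orbits and have rotation number $p/q$ (i.e. $|A|=kq$ and, listing $A=\{u_0<\dots<u_{kq-1}\}$, $\sigma_d(u_j)=u_{j+kp}$ for all $j\in\mathbb{Z}/kq\mathbb{Z}$) equals $$N_k=\sum_{j=1}^k(-1)^{k+j}\binom{k-1}{j-1}\binom{d-2+jq}{d-2}.$$
   Context: $\mathbb{T}=\mathbb{R}/\mathbb{Z}$, ordered by representatives in $[0,1)$; $\sigma_d(t)=dt$. A finite set $\{u_0<\dots<u_{N-1}\}\subset\mathbb{T}$ (indices in $\mathbb{Z}/N\mathbb{Z}$) is $\sigma_d$-rotational if for some fixed $0\ne P\in\mathbb{Z}/N\mathbb{Z}$, $\sigma_d(u_j)=u_{j+P}$ for all $j$; its rotation number is $P/N$. *)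

theory Defs
  imports Complex_Main
begin

text \<open>The circle T = R/Z is represented by the representatives in [0,1), with the
  order of the reals. The map sigma_d(t) = d t mod 1.\<close>

definition sigma :: "nat \<Rightarrow> real \<Rightarrow> real" where
  "sigma d t = frac (real d * t)"

text \<open>A finite nonempty set A of points of T, listed increasingly as
  u_0 < ... < u_(N-1) (N = card A), is sigma_d-rotational with shift P (P taken as a
  representative of an element of Z/NZ, required nonzero mod N) if
  sigma_d(u_j) = u_(j+P mod N) for all j. Its rotation number is then P/N.\<close>

definition rotational_with :: "nat \<Rightarrow> real set \<Rightarrow> nat \<Rightarrow> bool" where
  "rotational_with d A P \<longleftrightarrow>
     finite A \<and> A \<noteq> {} \<and> A \<subseteq> {0..<1} \<and> P mod card A \<noteq> 0 \<and>
     (\<forall>j < card A. sigma d (sorted_list_of_set A ! j)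
                    = sorted_list_of_set A ! ((j + P) mod card A))"

end

theory Submission
  imports Defs "HOL-Library.Multiset" "HOL-Number_Theory.Cong"
begin

text \<open>Write N = k q and P = k p. Listing a rotational set A as u_0 < ... < u_(N-1) and lifting
  it to the reals gives a strictly increasing F with F (j + N) = F j + 1 whose defects
  n_j = d F j - F (j + P) are integers; the choice of the starting index gives N such lifts
  per set. The defects are nondecreasing with n_(j+N) = n_j + d - 1, so they are encoded by
  n_0 \<in> {0, ..., d - 2} and the multiset of d - 1 jump positions modulo N. Conversely such
  data determine the lift uniquely, by solving the recursion along the P-orbits (d^q \<noteq> 1),
  and the lift is strictly increasing iff the jumps meet every residue class modulo k. Hence
  N times the number of sets is d - 1 times the number of such multisets, which is counted
  by inclusion-exclusion over the missed residue classes.\<close>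

lemma frac_eq_if_diff_in_Ints:
  fixes x y :: real
  assumes "x - y \<in> \<int>" "0 \<le> y" "y < 1"
  shows "frac x = y"
proof -
  have "frac x = frac (y + (x - y))" by simp
  also have "\<dots> = frac y" using assms(1) by (rule frac_add_int_right)
  finally show ?thesis using assms by (simp add: frac_eq)
qed

lemma periodic_add_mult:
  fixes f :: "nat \<Rightarrow> 'a::semiring_1"
  assumes "\<And>j. f (j + N) = f j + c"
  shows "f (j + m * N) = f j + of_nat m * c"
proof (induction m)
  case (Suc m)
  have "f (j + Suc m * N) = f ((j + m * N) + N)" by (simp add: algebra_simps)
  also have "\<dots> = f (j + m * N) + c" by (rule assms)
  finally show ?case using Suc by (simp add: algebra_simps)
qed simp

definition circle_lift :: "real set \<Rightarrow> nat \<Rightarrow> real" where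
  "circle_lift A i = sorted_list_of_set A ! (i mod card A) + real (i div card A)"

context
  fixes A :: "real set"
  assumes fin: "finite A" and sub: "A \<subseteq> {0..<1}" and ne: "A \<noteq> {}"
begin

private lemma card_pos: "card A > 0"
  using fin ne by (simp add: card_gt_0_iff)

private lemma sorted_nth_in: "i < card A \<Longrightarrow> sorted_list_of_set A ! i \<in> A"
  using fin by (metis length_sorted_list_of_set nth_mem set_sorted_list_of_set)

private lemma sorted_nth_bounds:
  "i < card A \<Longrightarrow> 0 \<le> sorted_list_of_set A ! i \<and> sorted_list_of_set A ! i < 1"
  using sorted_nth_in sub by fastforce

lemma circle_lift_strict_mono: "strict_mono (circle_lift A)"
  unfolding strict_mono_Suc_iff
proof
  fix i
  let ?xs = "sorted_list_of_set A"
  have lt: "?xs ! a < ?xs ! b" if "a < b" "b < card A" for a b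
    using strict_sorted_list_of_set[of A] that by (simp add: sorted_wrt_nth_less)
  show "circle_lift A i < circle_lift A (Suc i)"
  proof (cases "Suc (i mod card A) = card A")
    case True
    then have "i mod card A = card A - 1" by simp
    then have "circle_lift A i = ?xs ! (card A - 1) + real (i div card A)"
      by (simp add: circle_lift_def)
    moreover have "circle_lift A (Suc i) = ?xs ! 0 + real (i div card A) + 1"
      using True by (simp add: circle_lift_def mod_Suc div_Suc)
    ultimately show ?thesis
      using sorted_nth_bounds[of "card A - 1"] sorted_nth_bounds[of 0] card_pos by auto
  next
    case False
    then have "Suc (i mod card A) < card A"
      using card_pos by (metis Suc_lessI mod_less_divisor)
    then show ?thesis
      using False lt[of "i mod card A" "Suc (i mod card A)"]
      by (simp add: circle_lift_def mod_Suc div_Suc)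
  qed
qed

lemma circle_lift_add_card: "circle_lift A (i + card A) = circle_lift A i + 1"
  using card_pos by (simp add: circle_lift_def)

lemma frac_circle_lift: "frac (circle_lift A i) = sorted_list_of_set A ! (i mod card A)"
proof -
  have "frac (circle_lift A i) = frac (sorted_list_of_set A ! (i mod card A) + of_int (int (i div card A)))"
    by (simp add: circle_lift_def)
  also have "\<dots> = frac (sorted_list_of_set A ! (i mod card A))"
    by (rule frac_add_of_int_right)
  also have "\<dots> = sorted_list_of_set A ! (i mod card A)"
    using sorted_nth_bounds[of "i mod card A"] card_pos by (simp add: frac_eq)
  finally show ?thesis .
qed

lemma circle_lift_in_unit: "i < card A \<Longrightarrow> 0 \<le> circle_lift A i \<and> circle_lift A i < 1"
  using sorted_nth_bounds by (simp add: circle_lift_def)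

lemma frac_circle_lift_image: "frac ` range (\<lambda>j. circle_lift A (i + j)) = A"
proof
  show "frac ` range (\<lambda>j. circle_lift A (i + j)) \<subseteq> A"
    using frac_circle_lift sorted_nth_in card_pos by auto
  show "A \<subseteq> frac ` range (\<lambda>j. circle_lift A (i + j))"
  proof
    fix x assume "x \<in> A"
    then obtain t where t: "t < card A" "x = sorted_list_of_set A ! t"
      using fin by (metis in_set_conv_nth length_sorted_list_of_set set_sorted_list_of_set)
    have "i + (t + card A * Suc i - i) = t + card A * Suc i"
      using card_pos by (simp add: le_add2 trans_le_add2)
    then have "(i + (t + card A * Suc i - i)) mod card A = t"
      using t(1) by (metis mod_less mod_mult_self2)
    then have "frac (circle_lift A (i + (t + card A * Suc i - i))) = x"
      using frac_circle_lift t(2) by simp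
    then show "x \<in> frac ` range (\<lambda>j. circle_lift A (i + j))" by (metis rangeI image_eqI)
  qed
qed

lemma rotational_with_iff_circle_lift:
  "rotational_with d A P \<longleftrightarrow>
     P mod card A \<noteq> 0 \<and> (\<forall>i. real d * circle_lift A i - circle_lift A (i + P) \<in> \<int>)"
proof -
  define xs where "xs = sorted_list_of_set A"
  define n where "n = card A"
  have n0: "n > 0" using card_pos by (simp add: n_def)
  have split: "real d * circle_lift A i - circle_lift A (i + P)
      = (real d * xs ! (i mod n) - xs ! ((i mod n + P) mod n))
        + (real d * real (i div n) - real ((i + P) div n))" for i
  proof -
    have "(i mod n + P) mod n = (i + P) mod n" by (simp add: mod_add_left_eq)
    then show ?thesis by (simp add: circle_lift_def xs_def n_def algebra_simps)
  qed
  have "(\<forall>i. real d * circle_lift A i - circle_lift A (i + P) \<in> \<int>)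
      \<longleftrightarrow> (\<forall>j < n. sigma d (xs ! j) = xs ! ((j + P) mod n))"
  proof
    assume lift: "\<forall>i. real d * circle_lift A i - circle_lift A (i + P) \<in> \<int>"
    show "\<forall>j < n. sigma d (xs ! j) = xs ! ((j + P) mod n)"
    proof (intro allI impI)
      fix j assume j: "j < n"
      have "real d * xs ! j - xs ! ((j + P) mod n) \<in> \<int>"
        using lift[rule_format, of j] j unfolding split
        by (metis Ints_diff Ints_mult Ints_of_nat add_diff_cancel_right' mod_less)
      moreover have "0 \<le> xs ! ((j + P) mod n)" "xs ! ((j + P) mod n) < 1"
        using sorted_nth_bounds[of "(j + P) mod n"] n0 by (auto simp: xs_def n_def)
      ultimately show "sigma d (xs ! j) = xs ! ((j + P) mod n)"
        by (simp add: sigma_def frac_eq_if_diff_in_Ints)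
    qed
  next
    assume rot: "\<forall>j < n. sigma d (xs ! j) = xs ! ((j + P) mod n)"
    show "\<forall>i. real d * circle_lift A i - circle_lift A (i + P) \<in> \<int>"
    proof
      fix i
      have "sigma d (xs ! (i mod n)) = xs ! ((i mod n + P) mod n)"
        using rot n0 by simp
      then have "real d * xs ! (i mod n) - xs ! ((i mod n + P) mod n)
          = of_int \<lfloor>real d * xs ! (i mod n)\<rfloor>"
        by (simp add: sigma_def frac_def)
      then show "real d * circle_lift A i - circle_lift A (i + P) \<in> \<int>"
        unfolding split by (metis Ints_add Ints_diff Ints_mult Ints_of_int Ints_of_nat)
    qed
  qed
  then show ?thesis using fin ne sub by (simp add: rotational_with_def xs_def n_def)
qed

lemma Ints_shifted_circle_lift_iff:
  "(\<forall>j. real d * circle_lift A (i + j) - circle_lift A (i + (j + P)) \<in> \<int>)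
     \<longleftrightarrow> (\<forall>j. real d * circle_lift A j - circle_lift A (j + P) \<in> \<int>)"
proof
  assume shifted: "\<forall>j. real d * circle_lift A (i + j) - circle_lift A (i + (j + P)) \<in> \<int>"
  show "\<forall>j. real d * circle_lift A j - circle_lift A (j + P) \<in> \<int>"
  proof
    fix j
    \<comment> \<open>shift j by a multiple of card A exceeding i; this changes the expression by an integer\<close>
    define m where "m = Suc i"
    have per: "circle_lift A (x + m * card A) = circle_lift A x + real m" for x
      using periodic_add_mult[of "circle_lift A" "card A" 1, OF circle_lift_add_card] by simp
    have "i \<le> m * card A" using card_pos by (simp add: m_def trans_le_add2)
    then have "i + (j + m * card A - i) = j + m * card A"
      "i + ((j + m * card A - i) + P) = (j + P) + m * card A" by simp_all
    then have "circle_lift A (i + (j + m * card A - i)) = circle_lift A j + real m"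
      "circle_lift A (i + ((j + m * card A - i) + P)) = circle_lift A (j + P) + real m"
      by (simp_all only: per)
    then have "real d * circle_lift A j - circle_lift A (j + P) + (real d - 1) * real m \<in> \<int>"
      using shifted[rule_format, of "j + m * card A - i"] by (simp add: algebra_simps)
    moreover have "(real d - 1) * real m \<in> \<int>" by (intro Ints_mult Ints_diff) simp_all
    ultimately show "real d * circle_lift A j - circle_lift A (j + P) \<in> \<int>"
      by (metis Ints_diff add_diff_cancel_right')
  qed
qed (simp flip: add.assoc)

end

definition unit_lifts :: "nat \<Rightarrow> (nat \<Rightarrow> real) set" where
  "unit_lifts N = {F. strict_mono F \<and> (\<forall>j. F (j + N) = F j + 1) \<and> 0 \<le> F 0 \<and> F 0 < 1}"

lemma circle_lift_of_image:
  assumes mono: "strict_mono f" and per: "\<And>i. f (i + N) = f i + 1"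
    and unit: "f ` {..<N} \<subseteq> {0..<1}" and N: "N > 0"
  shows "card (f ` {..<N}) = N" and "circle_lift (f ` {..<N}) = f"
proof -
  show card: "card (f ` {..<N}) = N"
    using mono by (simp add: card_image strict_mono_imp_inj_on)
  have sorted: "sorted_list_of_set (f ` {..<N}) = map f [0..<N]"
  proof (rule strict_sorted_equal)
    show "sorted_wrt (<) (map f [0..<N])"
      using mono by (simp add: sorted_wrt_iff_nth_less strict_mono_def)
  qed (simp_all add: atLeast0LessThan)
  show "circle_lift (f ` {..<N}) = f"
  proof
    fix i
    have "circle_lift (f ` {..<N}) i = f (i mod N) + real (i div N)"
      using N by (simp add: circle_lift_def card sorted)
    also have "\<dots> = f (i mod N + (i div N) * N)"
      using periodic_add_mult[of f N 1, OF per, of "i mod N" "i div N"] by simp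
    finally show "circle_lift (f ` {..<N}) i = f i" by simp
  qed
qed

lemma shifted_circle_lift_in_unit_lifts:
  assumes "A \<subseteq> {0..<1}" "card A = N" "i < N"
  shows "(\<lambda>j. circle_lift A (i + j)) \<in> unit_lifts N"
proof -
  have A: "finite A" "A \<noteq> {}" using assms by (auto intro: card_ge_0_finite)
  show ?thesis
    using circle_lift_strict_mono[OF A(1) assms(1) A(2)]
      circle_lift_add_card[OF A(1) assms(1) A(2)] circle_lift_in_unit[OF A(1) assms(1) A(2)] assms
    by (simp add: unit_lifts_def strict_mono_def flip: add.assoc)
qed

lemma unit_lift_eq_shifted_circle_lift:
  assumes F: "F \<in> unit_lifts N" and N: "N > 0"
  obtains A i where "A \<subseteq> {0..<1}" "card A = N" "i < N" "F = (\<lambda>j. circle_lift A (i + j))"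
proof -
  have mono: "strict_mono F" and per: "\<And>j. F (j + N) = F j + 1" and F0: "0 \<le> F 0" "F 0 < 1"
    using F by (auto simp: unit_lifts_def)
  \<comment> \<open>start the enumeration at the first lift value in [1, 2)\<close>
  define a where "a = (LEAST j. 1 \<le> F j)"
  have "1 \<le> F N" using per[of 0] F0 by simp
  then have a1: "1 \<le> F a" and aN: "a \<le> N" unfolding a_def by (auto intro: LeastI Least_le)
  have a0: "a > 0" using a1 F0 by (cases a) auto
  have "F (a - 1) < 1"
    using not_less_Least[of "a - 1" "\<lambda>j. 1 \<le> F j"] a0 by (simp add: a_def)
  define f where "f i = F (a + i) - 1" for i
  have f_mono: "strict_mono f" using mono by (simp add: strict_mono_def f_def)
  have f_per: "f (i + N) = f i + 1" for i using per[of "a + i"] by (simp add: f_def add.assoc)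
  have "f ` {..<N} \<subseteq> {0..<1}"
  proof clarify
    fix i assume "i < N"
    then have "F a \<le> F (a + i)" "F (a + i) \<le> F (a - 1 + N)"
      using mono a0 by (simp_all add: strict_mono_less_eq)
    then show "f i \<in> {0..<1}" using a1 \<open>F (a - 1) < 1\<close> per[of "a - 1"] by (simp add: f_def)
  qed
  note image = circle_lift_of_image[OF f_mono f_per this N]
  have "F = (\<lambda>j. circle_lift (f ` {..<N}) ((N - a) + j))"
  proof
    fix j
    have "a + (N - a + j) = j + N" using aN by simp
    then have "f (N - a + j) = F j" using per[of j] by (simp add: f_def ac_simps)
    then show "F j = circle_lift (f ` {..<N}) (N - a + j)" by (simp add: image(2))
  qed
  moreover have "f ` {..<N} \<subseteq> {0..<1}" "N - a < N" using \<open>f ` {..<N} \<subseteq> {0..<1}\<close> a0 N by auto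
  ultimately show thesis using that image(1) by blast
qed

lemma bij_betw_shifted_circle_lift:
  assumes "N > 0"
  shows "bij_betw (\<lambda>(A, i) j. circle_lift A (i + j))
           ({A. A \<subseteq> {0..<1} \<and> card A = N} \<times> {..<N}) (unit_lifts N)"
  unfolding bij_betw_def
proof (intro conjI)
  have inj: "A = B \<and> i = i'"
    if A: "A \<subseteq> {0..<1}" "card A = N" and B: "B \<subseteq> {0..<1}" "card B = N"
      and eq: "(\<lambda>j. circle_lift A (i + j)) = (\<lambda>j. circle_lift B (i' + j))" for A B i i'
  proof -
    have finA: "finite A" "A \<noteq> {}" and finB: "finite B" "B \<noteq> {}"
      using A B assms by (auto intro: card_ge_0_finite)
    have "A = B"
      using frac_circle_lift_image[OF finA(1) A(1) finA(2), of i]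
        frac_circle_lift_image[OF finB(1) B(1) finB(2), of i'] eq by metis
    moreover have "i = i'"
      using fun_cong[OF eq, of 0] circle_lift_strict_mono[OF finA(1) A(1) finA(2)] \<open>A = B\<close>
      by (simp add: strict_mono_eq)
    ultimately show ?thesis ..
  qed
  show "inj_on (\<lambda>(A, i) j. circle_lift A (i + j)) ({A. A \<subseteq> {0..<1} \<and> card A = N} \<times> {..<N})"
  proof (rule inj_onI)
    fix x y
    assume "x \<in> {A. A \<subseteq> {0..<1} \<and> card A = N} \<times> {..<N}"
      "y \<in> {A. A \<subseteq> {0..<1} \<and> card A = N} \<times> {..<N}"
      "(\<lambda>(A, i) j. circle_lift A (i + j)) x = (\<lambda>(A, i) j. circle_lift A (i + j)) y"
    then show "x = y" using inj[of "fst x" "fst y" "snd x" "snd y"] by (auto simp: case_prod_beta prod_eq_iff mem_Times_iff)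
  qed
  show "(\<lambda>(A, i) j. circle_lift A (i + j)) ` ({A. A \<subseteq> {0..<1} \<and> card A = N} \<times> {..<N})
      = unit_lifts N"
  proof
    show "(\<lambda>(A, i) j. circle_lift A (i + j)) ` ({A. A \<subseteq> {0..<1} \<and> card A = N} \<times> {..<N})
        \<subseteq> unit_lifts N"
      using shifted_circle_lift_in_unit_lifts by auto
    show "unit_lifts N
        \<subseteq> (\<lambda>(A, i) j. circle_lift A (i + j)) ` ({A. A \<subseteq> {0..<1} \<and> card A = N} \<times> {..<N})"
    proof
      fix F assume "F \<in> unit_lifts N"
      then obtain A i where "A \<subseteq> {0..<1}" "card A = N" "i < N" "F = (\<lambda>j. circle_lift A (i + j))"
        using assms by (rule unit_lift_eq_shifted_circle_lift)
      then show "F \<in> (\<lambda>(A, i) j. circle_lift A (i + j)) ` ({A. A \<subseteq> {0..<1} \<and> card A = N} \<times> {..<N})"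
        by (intro image_eqI[of _ _ "(A, i)"]) auto
    qed
  qed
qed

lemma card_rotational_with_mult:
  assumes N: "N > 0" and P: "P mod N \<noteq> 0"
  shows "card {A. card A = N \<and> rotational_with d A P} * N
       = card {F \<in> unit_lifts N. \<forall>j. real d * F j - F (j + P) \<in> \<int>}"
proof -
  let ?S = "{A :: real set. A \<subseteq> {0..<1} \<and> card A = N}"
  have bij: "bij_betw (\<lambda>(A, i) j. circle_lift A (i + j)) {x \<in> ?S \<times> {..<N}. rotational_with d (fst x) P}
          {F \<in> unit_lifts N. \<forall>j. real d * F j - F (j + P) \<in> \<int>}"
  proof (rule bij_betw_Collect[OF bij_betw_shifted_circle_lift[OF N]], goal_cases)
    case (1 x)
    then obtain A i where x: "x = (A, i)" "A \<subseteq> {0..<1}" "card A = N" by auto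
    then have "finite A" "A \<noteq> {}" using N by (auto intro: card_ge_0_finite)
    then show ?case
      using x P by (simp add: Ints_shifted_circle_lift_iff rotational_with_iff_circle_lift)
  qed
  have sub: "rotational_with d A P \<Longrightarrow> A \<subseteq> {0..<1}" for A
    by (simp add: rotational_with_def)
  have eq: "{x \<in> ?S \<times> {..<N}. rotational_with d (fst x) P}
      = {A. card A = N \<and> rotational_with d A P} \<times> {..<N}"
  proof (intro set_eqI iffI)
    fix x assume "x \<in> {A. card A = N \<and> rotational_with d A P} \<times> {..<N}"
    then obtain A i where "x = (A, i)" "card A = N" "rotational_with d A P" "i < N" by blast
    then show "x \<in> {x \<in> ?S \<times> {..<N}. rotational_with d (fst x) P}" using sub[of A] by simp
  next
    fix x assume "x \<in> {x \<in> ?S \<times> {..<N}. rotational_with d (fst x) P}"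
    then show "x \<in> {A. card A = N \<and> rotational_with d A P} \<times> {..<N}" by (simp add: mem_Times_iff)
  qed
  show ?thesis
    using bij_betw_same_card[OF bij, unfolded eq] by (simp add: card_cartesian_product)
qed

lemma card_residue_classes:
  fixes k q :: nat
  assumes "k > 0" "C \<subseteq> {..<k}"
  shows "card {t. t < k*q \<and> t mod k \<in> C} = card C * q"
proof -
  have "bij_betw (\<lambda>t. (t mod k, t div k)) {t. t < k*q \<and> t mod k \<in> C} (C \<times> {..<q})"
  proof (rule bij_betw_byWitness[where f'="\<lambda>(r,i). r + k*i"])
    show "\<forall>a\<in>{t. t < k * q \<and> t mod k \<in> C}. (case (a mod k, a div k) of (r, i) \<Rightarrow> r + k * i) = a"
      by simp
    show "\<forall>a'\<in>C \<times> {..<q}. ((case a' of (r, i) \<Rightarrow> r + k * i) mod k, (case a' of (r, i) \<Rightarrow> r + k * i) div k) = a'"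
      using assms by auto
    show "(\<lambda>t. (t mod k, t div k)) ` {t. t < k * q \<and> t mod k \<in> C} \<subseteq> C \<times> {..<q}"
      using assms by (auto intro: less_mult_imp_div_less simp: mult.commute)
    show "(\<lambda>(r, i). r + k * i) ` (C \<times> {..<q}) \<subseteq> {t. t < k * q \<and> t mod k \<in> C}"
    proof clarsimp
      fix r i assume "r \<in> C" "i < q"
      then have "r < k" using assms by auto
      have "r + k*i < k + k*i" using \<open>r<k\<close> by simp
      also have "\<dots> = k * (i+1)" by simp
      also have "\<dots> \<le> k*q" using \<open>i<q\<close> by (intro mult_le_mono2) simp
      finally show "r + k*i < k*q \<and> r mod k \<in> C" using \<open>r<k\<close> \<open>r\<in>C\<close> by simp
    qed
  qed
  then show ?thesis by (simp add: bij_betw_same_card card_cartesian_product)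
qed

lemma sum_subsets_by_card:
  fixes g :: "nat \<Rightarrow> int"
  assumes "finite K"
  shows "(\<Sum>B | B \<subseteq> K. g (card B)) = (\<Sum>n=0..card K. int (card K choose n) * g n)"
proof -
  have fin: "finite {B. B \<subseteq> K}" using assms by simp
  have "(\<Sum>B | B \<subseteq> K. g (card B)) = (\<Sum>n\<in>{0..card K}. \<Sum>B\<in>{B. B \<in> {B. B \<subseteq> K} \<and> card B = n}. g (card B))"
    by (rule sum.group[symmetric]) (use assms in \<open>auto intro: card_mono\<close>)
  also have "\<dots> = (\<Sum>n=0..card K. int (card K choose n) * g n)"
  proof (rule sum.cong[OF refl])
    fix n
    have "(\<Sum>B\<in>{B. B \<in> {B. B \<subseteq> K} \<and> card B = n}. g (card B)) = (\<Sum>B\<in>{B. B \<subseteq> K \<and> card B = n}. g n)"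
      by (rule sum.cong) auto
    also have "\<dots> = int (card K choose n) * g n"
      using n_subsets[OF assms, of n] by simp
    finally show "(\<Sum>B\<in>{B. B \<in> {B. B \<subseteq> K} \<and> card B = n}. g (card B)) = int (card K choose n) * g n" .
  qed
  finally show ?thesis .
qed

lemma card_multisets_avoiding_residues:
  fixes k q s :: nat
  assumes k: "k > 0" and B: "B \<subseteq> {..<k}"
  shows "card {X \<in> multisets_of_size {..<k * q} s. \<forall>t\<in>#X. t mod k \<notin> B}
       = ((k - card B) * q + s - 1) choose s"
proof -
  have "{X \<in> multisets_of_size {..<k * q} s. \<forall>t\<in>#X. t mod k \<notin> B}
      = multisets_of_size {t. t < k * q \<and> t mod k \<in> {..<k} - B} s"
    using k by (auto simp: multisets_of_size_def)
  moreover have "card {t. t < k * q \<and> t mod k \<in> {..<k} - B} = (k - card B) * q"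
    using card_residue_classes[OF k, of "{..<k} - B" q] B by (simp add: card_Diff_subset finite_subset)
  ultimately show ?thesis by (simp add: card_multisets_of_size)
qed

lemma card_multisets_covering_residues:
  fixes k q s :: nat
  assumes k: "k > 0"
  shows "int (card {X \<in> multisets_of_size {..<k * q} s. \<forall>r<k. \<exists>t\<in>#X. t mod k = r})
     = (\<Sum>n=0..k. (-1)^n * int (k choose n) * int (((k - n) * q + s - 1) choose s))"
proof -
  define U where "U = multisets_of_size {..<k * q} s"
  define Z where "Z r = {X \<in> U. \<forall>t\<in>#X. t mod k \<noteq> r}" for r
  define h where "h n = int (((k - n) * q + s - 1) choose s)" for n
  have finU: "finite U" unfolding U_def by (rule finite_multisets_of_size) simp
  have Z_sub: "\<Union>(Z ` {..<k}) \<subseteq> U" by (auto simp: Z_def)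
  have avoid: "int (card (\<Inter>(Z ` B) \<inter> U)) = h (card B)" if "B \<subseteq> {..<k}" for B
  proof -
    have "\<Inter>(Z ` B) \<inter> U = {X \<in> U. \<forall>t\<in>#X. t mod k \<notin> B}" by (auto simp: Z_def)
    then show ?thesis
      using card_multisets_avoiding_residues[OF k that, of q s] by (simp add: U_def h_def)
  qed
  have incl_excl: "int (card (\<Union>(Z ` {..<k}) \<inter> U))
      = (\<Sum>B | B \<subseteq> {..<k} \<and> B \<noteq> {}. (-1)^(card B + 1) * int (card (\<Inter>(Z ` B) \<inter> U)))"
  proof (rule Incl_Excl_UN[of "\<lambda>S. int (card (S \<inter> U))"])
    fix S T :: "nat multiset set" assume "disjnt S T"
    then show "int (card ((S \<union> T) \<inter> U)) = int (card (S \<inter> U)) + int (card (T \<inter> U))"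
      using finU by (simp add: Int_Un_distrib2 disjnt_def) (subst card_Un_disjoint; auto)
  qed simp
  have "{X \<in> U. \<forall>r<k. \<exists>t\<in>#X. t mod k = r} = U - \<Union>(Z ` {..<k})"
    by (auto simp: Z_def)
  then have "int (card {X \<in> U. \<forall>r<k. \<exists>t\<in>#X. t mod k = r}) = h 0 - int (card (\<Union>(Z ` {..<k})))"
    using Z_sub finU avoid[of "{}"] by (simp add: card_Diff_subset finite_subset card_mono of_nat_diff)
  also have "\<dots> = h 0 + (\<Sum>B | B \<subseteq> {..<k} \<and> B \<noteq> {}. (-1)^(card B) * int (card (\<Inter>(Z ` B) \<inter> U)))"
    using incl_excl Z_sub by (simp add: Int_absorb2 sum_negf[symmetric])
  also have "\<dots> = h 0 + (\<Sum>B | B \<subseteq> {..<k} \<and> B \<noteq> {}. (-1)^(card B) * h (card B))"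
    using avoid by (intro arg_cong2[where f = "(+)"] sum.cong) simp_all
  also have "\<dots> = (\<Sum>B | B \<subseteq> {..<k}. (-1)^(card B) * h (card B))"
  proof -
    have "{B. B \<subseteq> {..<k}} - {{}} = {B. B \<subseteq> {..<k} \<and> B \<noteq> {}}" by auto
    then show ?thesis using sum.remove[of "{B. B \<subseteq> {..<k}}" "{}" "\<lambda>B. (-1)^(card B) * h (card B)"] by simp
  qed
  also have "\<dots> = (\<Sum>n=0..k. (-1)^n * int (k choose n) * h n)"
    using sum_subsets_by_card[of "{..<k}" "\<lambda>n. (-1)^n * h n"] by (simp add: ac_simps)
  finally show ?thesis by (simp add: U_def h_def)
qed

lemma coprime_affine_hits_residue:
  fixes p q :: nat
  assumes "coprime p q" "b < q"
  shows "\<exists>r<q. (a + r * p) mod q = b"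
proof -
  define f where "f r = (a + r * p) mod q" for r
  have "inj_on f {..<q}"
  proof (rule inj_onI)
    fix r r' assume r: "r \<in> {..<q}" "r' \<in> {..<q}" and "f r = f r'"
    then have "[a + r * p = a + r' * p] (mod q)" by (simp add: f_def cong_def)
    then have "[r * p = r' * p] (mod q)" by (simp add: cong_add_lcancel_nat)
    then have "[r = r'] (mod q)" using cong_mult_rcancel_nat[OF assms(1)] by simp
    then show "r = r'" using r by (simp add: cong_def)
  qed
  moreover have "f ` {..<q} \<subseteq> {..<q}" using assms(2) by (auto simp: f_def)
  ultimately have "f ` {..<q} = {..<q}" by (intro endo_inj_surj) auto
  then have "b \<in> f ` {..<q}" using assms(2) by simp
  then show ?thesis by (auto simp: f_def)
qed

locale rotation_count =
  fixes d q p k :: nat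
  assumes d_ge_2: "d \<ge> 2" and q_ge_2: "q \<ge> 2" and p_pos: "p > 0" and p_less_q: "p < q"
    and coprime_pq: "coprime p q" and k_pos: "k > 0"
begin

definition N :: nat where "N = k * q"
definition P :: nat where "P = k * p"

lemma N_pos: "N > 0" using k_pos q_ge_2 by (simp add: N_def)
lemma P_pos: "P > 0" using k_pos p_pos by (simp add: P_def)
lemma P_less_N: "P < N" using k_pos p_less_q by (simp add: P_def N_def)
lemma N_gt_1: "N > 1"
proof -
  have "1 * 2 \<le> k * q" using k_pos q_ge_2 by (intro mult_le_mono) auto
  then show ?thesis by (simp add: N_def)
qed
lemma q_mult_P: "q * P = p * N" by (simp add: P_def N_def)

lemma power_q_gt_1: "real d ^ q > 1"
  using d_ge_2 q_ge_2 by (simp add: one_less_power)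

lemma geometric_sum: "(\<Sum>r<q. real d ^ (q - Suc r)) * (real d - 1) = real d ^ q - 1"
proof -
  have "(\<Sum>r<q. real d ^ (q - Suc r)) = (\<Sum>r<q. real d ^ r)"
    by (rule sum.nat_diff_reindex)
  then show ?thesis using power_diff_1_eq[of "real d" q] by (simp add: mult.commute)
qed

text \<open>offset X c is the candidate defect sequence: X records its jumps, c its value at 0.\<close>

definition offset :: "nat multiset \<Rightarrow> nat \<Rightarrow> nat \<Rightarrow> int" where
  "offset X c j = int c + (\<Sum>t<j. int (count X (t mod N)))"

lemma offset_0: "offset X c 0 = int c"
  by (simp add: offset_def)

lemma offset_Suc: "offset X c (Suc j) = offset X c j + int (count X (j mod N))"
  by (simp add: offset_def)

lemma offset_add_N:
  assumes X: "X \<in> multisets_of_size {..<N} (d - 1)"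
  shows "offset X c (j + N) = offset X c j + int (d - 1)"
proof (induction j)
  case 0
  have "size X = (\<Sum>t\<in>set_mset X. count X t)" by (rule size_multiset_overloaded_eq)
  also have "\<dots> = (\<Sum>t<N. count X t)"
    using X by (intro sum.mono_neutral_left) (auto simp: multisets_of_size_def count_eq_zero_iff)
  finally show ?case using X by (simp add: offset_def multisets_of_size_def flip: of_nat_sum)
next
  case (Suc j)
  have "offset X c (Suc j + N) = offset X c (j + N) + int (count X ((j + N) mod N))"
    using offset_Suc[of X c "j + N"] by simp
  then show ?case using Suc by (simp add: offset_Suc)
qed

text \<open>Where lift_of comes from: a solution F of F (j + P) = d F j - offset X c j with
  F (j + N) = F j + 1 satisfies F (j + q P) = F j + p, and iterating the recursion q times
  along j, j + P, ..., j + q P gives d^q F j - \<Sum>r<q. d^(q-1-r) offset X c (j + r P) = F j + p.\<close>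

definition lift_of :: "nat multiset \<Rightarrow> nat \<Rightarrow> nat \<Rightarrow> real" where
  "lift_of X c j =
     (real p + (\<Sum>r<q. real d ^ (q - Suc r) * of_int (offset X c (j + r * P)))) / (real d ^ q - 1)"

context
  fixes X :: "nat multiset" and c :: nat
  assumes X: "X \<in> multisets_of_size {..<N} (d - 1)"
begin

lemma lift_of_recursion: "real d * lift_of X c j - lift_of X c (j + P) = of_int (offset X c j)"
proof -
  define a where "a r = (of_int (offset X c (j + r * P)) :: real)" for r
  define S1 where "S1 = (\<Sum>r<q. real d ^ (q - Suc r) * a r)"
  define S2 where "S2 = (\<Sum>r<q. real d ^ (q - Suc r) * a (Suc r))"
  have dS1: "real d * S1 = (\<Sum>r<q. real d ^ (q - r) * a r)"
    unfolding S1_def sum_distrib_left by (intro sum.cong refl) (simp add: Suc_diff_Suc flip: power_Suc)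
  have telescope: "(\<Sum>r<q. real d ^ (q - r) * a r) - S2 = real d ^ q * a 0 - a q"
    using sum_lessThan_telescope'[of "\<lambda>r. real d ^ (q - r) * a r" q]
    by (simp add: S2_def sum_subtractf)
  have "offset X c (j + q * P) = offset X c j + int p * int (d - 1)"
    using periodic_add_mult[of "offset X c" N, OF offset_add_N[OF X], of j p] q_mult_P
    by (simp add: mult.commute)
  then have aq: "a q = a 0 + real p * (real d - 1)"
    using d_ge_2 by (simp add: a_def of_nat_diff)
  have "real d * (real p + S1) - (real p + S2) = (real d ^ q - 1) * a 0"
    using telescope aq dS1 by (simp add: algebra_simps)
  then show ?thesis
    using power_q_gt_1
    by (simp add: lift_of_def S1_def S2_def a_def add.assoc diff_divide_distrib[symmetric])
qed

lemma lift_of_add_N: "lift_of X c (j + N) = lift_of X c j + 1"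
proof -
  have shift: "real_of_int (offset X c (j + N + r * P))
      = real_of_int (offset X c (j + r * P)) + (real d - 1)" for r
    using offset_add_N[OF X, of c "j + r * P"] d_ge_2 by (simp add: ac_simps of_nat_diff)
  have "(\<Sum>r<q. real d ^ (q - Suc r) * of_int (offset X c (j + N + r * P)))
      = (\<Sum>r<q. real d ^ (q - Suc r) * of_int (offset X c (j + r * P))
          + real d ^ (q - Suc r) * (real d - 1))"
    by (intro sum.cong refl) (simp only: shift, simp add: algebra_simps)
  then have "(\<Sum>r<q. real d ^ (q - Suc r) * of_int (offset X c (j + N + r * P)))
      = (\<Sum>r<q. real d ^ (q - Suc r) * of_int (offset X c (j + r * P)))
        + (\<Sum>r<q. real d ^ (q - Suc r)) * (real d - 1)"
    by (simp add: sum.distrib sum_distrib_right)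
  then show ?thesis
    using power_q_gt_1 by (simp add: lift_of_def geometric_sum add_divide_distrib)
qed

end

lemma lift_of_Suc_minus:
  "lift_of X c (Suc j) - lift_of X c j
     = (\<Sum>r<q. real d ^ (q - Suc r) * real (count X ((j + r * P) mod N))) / (real d ^ q - 1)"
proof -
  have "offset X c (Suc j + r * P) = offset X c (j + r * P) + int (count X ((j + r * P) mod N))" for r
    using offset_Suc[of X c "j + r * P"] by simp
  then show ?thesis
    by (simp add: lift_of_def diff_divide_distrib[symmetric] sum_subtractf[symmetric] algebra_simps)
qed

definition rotation_lifts :: "(nat \<Rightarrow> real) set" where
  "rotation_lifts = {F \<in> unit_lifts N. \<forall>j. real d * F j - F (j + P) \<in> \<int>}"

definition covering_multisets :: "nat multiset set" where
  "covering_multisets = {X \<in> multisets_of_size {..<N} (d - 1). \<forall>r<k. \<exists>t\<in>#X. t mod k = r}"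

lemma covering_multisets_subset: "covering_multisets \<subseteq> multisets_of_size {..<N} (d - 1)"
  by (auto simp: covering_multisets_def)

lemma mod_N_eq: "x mod N = k * (x div k mod q) + x mod k"
  by (simp add: N_def mod_mult2_eq)

text \<open>The orbit j, j + P, ..., j + (q - 1) P modulo N stays in the residue class of j
  modulo k and, as p is invertible modulo q, meets every element of that class.\<close>

lemma covering_multiset_meets_orbit:
  assumes "X \<in> covering_multisets"
  obtains r where "r < q" "count X ((j + r * P) mod N) > 0"
proof -
  have "j mod k < k" using k_pos by simp
  then obtain t where t: "t \<in># X" "t mod k = j mod k"
    using assms unfolding covering_multisets_def by blast
  have "t < N" using t assms by (auto simp: covering_multisets_def multisets_of_size_def)
  then have "t div k < q" by (simp add: N_def less_mult_imp_div_less mult.commute)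
  then obtain r where r: "r < q" "(j div k + r * p) mod q = t div k"
    using coprime_affine_hits_residue[OF coprime_pq] by blast
  have orbit: "j + r * P = j + k * (r * p)" by (simp add: P_def)
  have "(j + r * P) div k = j div k + r * p" "(j + r * P) mod k = j mod k"
    using k_pos unfolding orbit by simp_all
  then have "(j + r * P) mod N = k * (t div k) + t mod k"
    using mod_N_eq[of "j + r * P"] r t by simp
  also have "\<dots> = t" by simp
  finally show thesis using that r t by simp
qed

lemma lift_of_strict_mono:
  assumes "X \<in> covering_multisets"
  shows "strict_mono (lift_of X c)"
  unfolding strict_mono_Suc_iff
proof
  fix j
  obtain r where "r < q" "count X ((j + r * P) mod N) > 0"
    using assms by (rule covering_multiset_meets_orbit)
  then have "0 < (\<Sum>r<q. real d ^ (q - Suc r) * real (count X ((j + r * P) mod N)))"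
    using d_ge_2 by (intro sum_pos2[of _ r]) auto
  then have "lift_of X c (Suc j) - lift_of X c j > 0"
    using power_q_gt_1 by (simp add: lift_of_Suc_minus)
  then show "lift_of X c j < lift_of X c (Suc j)" by simp
qed

lemma lift_of_in_rotation_lifts:
  assumes X: "X \<in> covering_multisets" and c: "c < d - 1"
  shows "lift_of X c \<in> rotation_lifts"
proof -
  have X': "X \<in> multisets_of_size {..<N} (d - 1)" using X covering_multisets_subset by blast
  have mono: "strict_mono (lift_of X c)" using X by (rule lift_of_strict_mono)
  have rec0: "real d * lift_of X c 0 - lift_of X c P = real c"
    using lift_of_recursion[OF X', of c 0] by (simp add: offset_0)
  have "lift_of X c 0 < lift_of X c P" "lift_of X c P < lift_of X c N"
    using mono P_pos P_less_N by (simp_all add: strict_mono_less)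
  moreover have "lift_of X c N = lift_of X c 0 + 1"
    using lift_of_add_N[OF X', of c 0] by simp
  ultimately have lo: "0 < (real d - 1) * lift_of X c 0"
    and hi: "(real d - 1) * lift_of X c 0 < real d - 1"
    using rec0 c by (simp_all add: algebra_simps)
  have pos: "real d - 1 > 0" using d_ge_2 by simp
  have "0 < lift_of X c 0" using zero_less_mult_pos[OF lo pos] .
  moreover have "lift_of X c 0 < 1" using hi mult_less_cancel_left_pos[OF pos, of _ 1] by simp
  moreover have "real d * lift_of X c j - lift_of X c (j + P) \<in> \<int>" for j
    using lift_of_recursion[OF X', of c j] by (metis Ints_of_int)
  ultimately show ?thesis
    using mono lift_of_add_N[OF X'] by (simp add: rotation_lifts_def unit_lifts_def)
qed

lemma inj_on_lift_of: "inj_on (\<lambda>(X, c). lift_of X c) (covering_multisets \<times> {..<d - 1})"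
proof (rule inj_onI, clarsimp)
  fix X c X' c'
  assume X: "X \<in> covering_multisets" "X' \<in> covering_multisets" and eq: "lift_of X c = lift_of X' c'"
  then have X': "X \<in> multisets_of_size {..<N} (d - 1)" "X' \<in> multisets_of_size {..<N} (d - 1)"
    using covering_multisets_subset by blast+
  have offset_eq: "offset X c j = offset X' c' j" for j
    using lift_of_recursion[OF X'(1), of c j] lift_of_recursion[OF X'(2), of c' j] eq by simp
  have "c = c'" using offset_eq[of 0] by (simp add: offset_0)
  moreover have "X = X'"
  proof (rule multiset_eqI)
    fix t
    show "count X t = count X' t"
    proof (cases "t < N")
      case True
      then show ?thesis using offset_eq[of "Suc t"] offset_eq[of t] by (simp add: offset_Suc)
    next
      case False
      then have "t \<notin># X" "t \<notin># X'" using X' by (auto simp: multisets_of_size_def)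
      then show ?thesis by (simp add: not_in_iff)
    qed
  qed
  ultimately show "X = X' \<and> c = c'" by simp
qed

definition defect :: "(nat \<Rightarrow> real) \<Rightarrow> nat \<Rightarrow> int" where
  "defect F j = \<lfloor>real d * F j - F (j + P)\<rfloor>"

context
  fixes F :: "nat \<Rightarrow> real"
  assumes F: "F \<in> rotation_lifts"
begin

private lemma F_mono: "strict_mono F" and F_add_N: "F (j + N) = F j + 1"
  and F_0: "0 \<le> F 0" "F 0 < 1"
  using F by (auto simp: rotation_lifts_def unit_lifts_def)

lemma of_int_defect: "of_int (defect F j) = real d * F j - F (j + P)"
proof -
  have "real d * F j - F (j + P) \<in> \<int>" using F by (simp add: rotation_lifts_def)
  then show ?thesis unfolding defect_def by (metis Ints_cases floor_of_int)
qed

lemma defect_add_N: "defect F (j + N) = defect F j + int (d - 1)"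
proof -
  have "F (j + N + P) = F (j + P) + 1" using F_add_N[of "j + P"] by (simp add: ac_simps)
  then have "real_of_int (defect F (j + N)) = real_of_int (defect F j + int (d - 1))"
    using of_int_defect[of "j + N"] of_int_defect[of j] F_add_N[of j] d_ge_2
    by (simp add: algebra_simps of_nat_diff)
  then show ?thesis by (simp only: of_int_eq_iff)
qed

lemma defect_mono: "defect F j \<le> defect F (Suc j)"
proof -
  have "real_of_int (defect F (Suc j) - defect F j)
      = real d * (F (Suc j) - F j) - (F (Suc (j + P)) - F (j + P))"
    using of_int_defect[of "Suc j"] of_int_defect[of j] by (simp add: algebra_simps)
  moreover have "real d * (F (Suc j) - F j) > 0"
    using F_mono d_ge_2 by (simp add: strict_mono_less)
  moreover have "F (Suc (j + P)) < F (j + P + N)"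
    using F_mono N_gt_1 by (simp add: strict_mono_less)
  ultimately have "real_of_int (defect F (Suc j) - defect F j) > -1"
    using F_add_N[of "j + P"] by linarith
  then show ?thesis by simp
qed

lemma defect_0_bounds: "0 \<le> defect F 0" "defect F 0 < int (d - 1)"
proof -
  have "F 0 < F P" "F P < F N" using F_mono P_pos P_less_N by (simp_all add: strict_mono_less)
  moreover have "F N = F 0 + 1" using F_add_N[of 0] by simp
  moreover have "real_of_int (defect F 0) = (real d - 1) * F 0 - (F P - F 0)"
    using of_int_defect[of 0] by (simp add: algebra_simps)
  moreover have "0 \<le> (real d - 1) * F 0" "(real d - 1) * F 0 < real d - 1"
    using F_0 d_ge_2 by simp_all
  ultimately have "real_of_int (defect F 0) > -1" "real_of_int (defect F 0) < real d - 1" by linarith+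
  then show "0 \<le> defect F 0" "defect F 0 < int (d - 1)" using d_ge_2 by (simp_all add: of_nat_diff)
qed

end

definition jumps :: "(nat \<Rightarrow> int) \<Rightarrow> nat multiset" where
  "jumps n = (\<Sum>t<N. replicate_mset (nat (n (Suc t) - n t)) t)"

lemma jumps_offset:
  assumes mono: "\<And>j. n j \<le> n (Suc j)" and per: "\<And>j. n (j + N) = n j + int (d - 1)"
    and "0 \<le> n 0"
  shows "jumps n \<in> multisets_of_size {..<N} (d - 1)" and "offset (jumps n) (nat (n 0)) = n"
proof -
  have count: "count (jumps n) x = (if x < N then nat (n (Suc x) - n x) else 0)" for x
    by (simp add: jumps_def count_sum)
  have "int (size (jumps n)) = (\<Sum>t<N. n (Suc t) - n t)"
    using mono by (simp add: jumps_def)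
  also have "\<dots> = int (d - 1)" using per[of 0] by (simp add: sum_lessThan_telescope)
  finally have "size (jumps n) = d - 1" by simp
  moreover have "set_mset (jumps n) \<subseteq> {..<N}"
  proof
    fix x assume "x \<in># jumps n"
    then have "count (jumps n) x \<noteq> 0" by simp
    then show "x \<in> {..<N}" using count[of x] by (simp split: if_splits)
  qed
  ultimately show "jumps n \<in> multisets_of_size {..<N} (d - 1)"
    by (simp add: multisets_of_size_def)
  have step: "n (Suc j) - n j = n (Suc (j mod N)) - n (j mod N)" for j
    using periodic_add_mult[of n N "int (d - 1)", OF per, of "j mod N" "j div N"]
      periodic_add_mult[of n N "int (d - 1)", OF per, of "Suc (j mod N)" "j div N"]
    by (simp add: mod_div_mult_eq)
  show "offset (jumps n) (nat (n 0)) = n"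
  proof
    fix j show "offset (jumps n) (nat (n 0)) j = n j"
    proof (induction j)
      case (Suc j)
      then show ?case using mono[of "j mod N"] step[of j] N_pos by (simp add: offset_Suc count)
    qed (use \<open>0 \<le> n 0\<close> in \<open>simp add: offset_0\<close>)
  qed
qed

lemma lift_unique:
  assumes "\<And>j. F (j + N) = F j + 1" "\<And>j. G (j + N) = G j + 1"
    and "\<And>j. real d * F j - F (j + P) = real d * G j - G (j + P)"
  shows "F = G"
proof
  fix j
  define H where "H i = F i - G i" for i
  have rec: "H (i + P) = real d * H i" for i using assms(3)[of i] by (simp add: H_def algebra_simps)
  have "H (i + r * P) = real d ^ r * H i" for i r
  proof (induction r)
    case (Suc r)
    have "H (i + Suc r * P) = H ((i + r * P) + P)" by (simp add: algebra_simps)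
    then show ?case using Suc rec[of "i + r * P"] by simp
  qed simp
  moreover have "H (i + m * N) = H i" for i m
    using periodic_add_mult[of H N 0] assms(1,2) by (simp add: H_def)
  ultimately have "real d ^ q * H j = H j"
    using q_mult_P by (metis mult.commute)
  then have "(real d ^ q - 1) * H j = 0" by (simp add: algebra_simps)
  then have "H j = 0" using power_q_gt_1 by simp
  then show "F j = G j" by (simp add: H_def)
qed

lemma rotation_lift_eq_lift_of:
  assumes F: "F \<in> rotation_lifts"
  obtains X c where "X \<in> covering_multisets" "c < d - 1" "F = lift_of X c"
proof -
  define X where "X = jumps (defect F)"
  define c where "c = nat (defect F 0)"
  note jumps = jumps_offset[of "defect F", OF defect_mono[OF F] defect_add_N[OF F] defect_0_bounds(1)[OF F]]
  have X_size: "X \<in> multisets_of_size {..<N} (d - 1)" using jumps(1) by (simp add: X_def)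
  have "c < d - 1" using defect_0_bounds[OF F] by (simp add: c_def)
  have F_eq: "F = lift_of X c"
  proof (rule lift_unique)
    show "F (j + N) = F j + 1" for j using F by (simp add: rotation_lifts_def unit_lifts_def)
    show "lift_of X c (j + N) = lift_of X c j + 1" for j by (rule lift_of_add_N[OF X_size])
    show "real d * F j - F (j + P) = real d * lift_of X c j - lift_of X c (j + P)" for j
      using of_int_defect[OF F, of j] lift_of_recursion[OF X_size, of c j] jumps(2)
      by (simp add: X_def c_def)
  qed
  have "\<exists>t\<in>#X. t mod k = r" if r: "r < k" for r
  proof -
    have "lift_of X c r < lift_of X c (Suc r)"
      using F F_eq by (simp add: rotation_lifts_def unit_lifts_def strict_mono_less)
    then have "0 < (\<Sum>i<q. real d ^ (q - Suc i) * real (count X ((r + i * P) mod N))) / (real d ^ q - 1)"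
      using lift_of_Suc_minus[of X c r] by simp
    then have "0 < (\<Sum>i<q. real d ^ (q - Suc i) * real (count X ((r + i * P) mod N)))"
      using power_q_gt_1 by (simp add: zero_less_divide_iff)
    then obtain i where "real d ^ (q - Suc i) * real (count X ((r + i * P) mod N)) \<noteq> 0"
      by (metis (no_types, lifting) less_irrefl sum.neutral)
    then have "count X ((r + i * P) mod N) \<noteq> 0" by simp
    moreover have "(r + i * P) mod N mod k = r"
    proof -
      have orbit: "r + i * P = r + k * (i * p)" by (simp add: P_def)
      have "(r + i * P) mod N mod k = (r + i * P) mod k" by (simp add: N_def mod_mod_cancel)
      also have "\<dots> = r" unfolding orbit using r by simp
      finally show ?thesis .
    qed
    ultimately show ?thesis by (metis count_eq_zero_iff)
  qed
  then have "X \<in> covering_multisets" using X_size by (simp add: covering_multisets_def)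
  then show thesis using that \<open>c < d - 1\<close> F_eq by blast
qed

lemma card_rotation_lifts: "card rotation_lifts = card covering_multisets * (d - 1)"
proof -
  have "bij_betw (\<lambda>(X, c). lift_of X c) (covering_multisets \<times> {..<d - 1}) rotation_lifts"
    unfolding bij_betw_def
  proof
    show "(\<lambda>(X, c). lift_of X c) ` (covering_multisets \<times> {..<d - 1}) = rotation_lifts"
    proof
      show "(\<lambda>(X, c). lift_of X c) ` (covering_multisets \<times> {..<d - 1}) \<subseteq> rotation_lifts"
        using lift_of_in_rotation_lifts by auto
      show "rotation_lifts \<subseteq> (\<lambda>(X, c). lift_of X c) ` (covering_multisets \<times> {..<d - 1})"
      proof
        fix F assume "F \<in> rotation_lifts"
        then obtain X c where "X \<in> covering_multisets" "c < d - 1" "F = lift_of X c"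
          by (rule rotation_lift_eq_lift_of)
        then show "F \<in> (\<lambda>(X, c). lift_of X c) ` (covering_multisets \<times> {..<d - 1})"
          by (intro image_eqI[of _ _ "(X, c)"]) auto
      qed
    qed
  qed (rule inj_on_lift_of)
  then have "card (covering_multisets \<times> {..<d - 1}) = card rotation_lifts"
    by (rule bij_betw_same_card)
  then show ?thesis by (simp add: card_cartesian_product)
qed

end

lemma times_binomial_add_eq:
  fixes e n :: nat
  shows "n * ((e + n) choose e) = Suc e * ((e + n) choose Suc e)"
proof (cases n)
  case (Suc b)
  then show ?thesis using Suc_times_binomial_add[of e b] by simp
qed simp

lemma binomial_term_rescale:
  fixes d q k j :: nat
  assumes "d \<ge> 2" "1 \<le> j" "j \<le> k"
  shows "int (k * q) * ((-1)^(k + j) * int ((k - 1) choose (j - 1)) * int ((d - 2 + j * q) choose (d - 2)))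
       = int (d - 1) * ((-1)^(k - j) * int (k choose j) * int ((j * q + d - 2) choose (d - 1)))"
proof -
  have "(-1::int)^(k + j) = (-1)^((k - j) + 2 * j)"
    using assms by (intro arg_cong[where f = "(^) (-1)"]) simp
  also have "\<dots> = (-1)^(k - j)" by (simp add: power_add power_mult)
  finally have sign: "(-1::int)^(k + j) = (-1)^(k - j)" .
  have "k * ((k - 1) choose (j - 1)) = j * (k choose j)"
    using times_binomial_minus1_eq[of j k] assms by simp
  moreover have "j * q * ((d - 2 + j * q) choose (d - 2)) = (d - 1) * ((j * q + d - 2) choose (d - 1))"
  proof -
    obtain e where "d = e + 2" using assms(1) by (metis add.commute le_Suc_ex)
    then have "d - 2 = e" "d - 1 = Suc e" "d - 2 + j * q = e + j * q" "j * q + d - 2 = e + j * q"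
      by simp_all
    then show ?thesis using times_binomial_add_eq[of "j * q" e] by (simp only:)
  qed
  ultimately have "k * q * (((k - 1) choose (j - 1)) * ((d - 2 + j * q) choose (d - 2)))
      = (d - 1) * ((k choose j) * ((j * q + d - 2) choose (d - 1)))"
    by (metis (no_types, lifting) mult.assoc mult.left_commute)
  then have "int (k * q) * (int ((k - 1) choose (j - 1)) * int ((d - 2 + j * q) choose (d - 2)))
      = int (d - 1) * (int (k choose j) * int ((j * q + d - 2) choose (d - 1)))"
    by (metis of_nat_mult)
  then show ?thesis unfolding sign by (simp add: ac_simps)
qed

lemma rotational_count_formula:
  fixes d q k S M :: nat
  assumes d: "d \<ge> 2" and q: "q \<ge> 1" and k: "k \<ge> 1"
    and double_count: "S * (k*q) = M * (d-1)"
    and M_eq: "int M = (\<Sum>n=0..k. (-1)^n * int (k choose n) * int (((k-n)*q + (d-1) - 1) choose (d-1)))"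
  shows "int S = (\<Sum>j=1..k. (-1)^(k+j) * int ((k-1) choose (j-1)) * int ((d-2+j*q) choose (d-2)))"
proof -
  define g where "g n = (-1::int)^n * int (k choose n) * int (((k-n)*q + (d-1) - 1) choose (d-1))" for n
  define h where "h j = (-1::int)^(k-j) * int (k choose j) * int ((j*q + d - 2) choose (d-1))" for j
  have "(\<Sum>n=0..k. g n) = (\<Sum>j=0..k. g (k - j))"
    by (intro sum.reindex_bij_witness[of _ "\<lambda>j. k - j" "\<lambda>j. k - j"]) auto
  also have "\<dots> = (\<Sum>j=0..k. h j)"
  proof (rule sum.cong[OF refl])
    fix j assume "j \<in> {0..k}"
    then have j: "j \<le> k" by simp
    then have "k - (k - j) = j" "(j*q + (d-1) - 1) = j*q + d - 2" using d by auto
    then show "g (k - j) = h j" using j by (simp add: g_def h_def binomial_symmetric[OF j, symmetric])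
  qed
  also have "\<dots> = h 0 + (\<Sum>j=1..k. h j)"
    by (simp add: sum.atLeast_Suc_atMost)
  also have "h 0 = 0" using d by (simp add: h_def)
  finally have M_eq_h: "int M = (\<Sum>j=1..k. h j)" using M_eq by (simp add: g_def)
  have "int (k*q) * (\<Sum>j=1..k. (-1)^(k+j) * int ((k-1) choose (j-1)) * int ((d-2+j*q) choose (d-2)))
      = (\<Sum>j=1..k. int (d-1) * h j)"
    unfolding sum_distrib_left h_def using d by (intro sum.cong refl binomial_term_rescale) auto
  also have "\<dots> = int (d-1) * int M" by (simp add: M_eq_h sum_distrib_left)
  also have "\<dots> = int (k*q) * int S" using double_count by (metis mult.commute of_nat_mult)
  finally show ?thesis using k q by simp
qed

theorem mainTheorem11:
  fixes d q p k :: nat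
  assumes "d \<ge> 2" and "q \<ge> 2" and "1 \<le> p" and "p \<le> q - 1" and "coprime p q"
    and "1 \<le> k" and "k \<le> d - 1"
  shows "int (card {A :: real set. card A = k * q \<and> rotational_with d A (k * p)})
         = (\<Sum>j = 1..k. (-1) ^ (k + j) * int ((k - 1) choose (j - 1))
                          * int ((d - 2 + j * q) choose (d - 2)))"
proof -
  interpret rotation_count d q p k using assms by unfold_locales auto
  have "card {A. card A = N \<and> rotational_with d A P} * N = card covering_multisets * (d - 1)"
    using card_rotational_with_mult[OF N_pos, of P d] P_pos P_less_N card_rotation_lifts
    by (simp add: rotation_lifts_def)
  moreover have "int (card covering_multisets)
      = (\<Sum>n=0..k. (-1)^n * int (k choose n) * int (((k - n) * q + (d - 1) - 1) choose (d - 1)))"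
    using card_multisets_covering_residues[of k q "d - 1"] k_pos
    by (simp add: covering_multisets_def N_def)
  ultimately show ?thesis
    using rotational_count_formula assms by (simp add: N_def P_def)
qed

end
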